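(* Let $A$ be a congruence--distributive algebra in a variety $\mathcal{V}$ and let $\alpha$ be an atom of the lattice ${\rm Con}_{\mathcal{V}}(A)$. Then $|{\rm Con}_{\mathcal{V}}(A)|\leq 2\cdot|{\rm Con}_{\mathcal{V}}(A/\alpha)|$.
   Context: ${\rm Con}_{\mathcal{V}}(A)$ denotes the lattice of congruences of $A$ with respect to the type of $\mathcal{V}$; $A$ is congruence--distributive if this lattice is distributive. *)

theory Defs
  imports Main
begin

definition is_algebra :: "('f \<Rightarrow> nat) \<Rightarrow> 'a set \<Rightarrow> ('f \<Rightarrow> 'a list \<Rightarrow> 'a) \<Rightarrow> bool" where
  "is_algebra ar A op \<longleftrightarrow>
     (\<forall>f xs. length xs = ar f \<longrightarrow> set xs \<subseteq> A \<longrightarrow> op f xs \<in> A)"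

definition is_congruence :: "('f \<Rightarrow> nat) \<Rightarrow> 'a set \<Rightarrow> ('f \<Rightarrow> 'a list \<Rightarrow> 'a) \<Rightarrow> 'a rel \<Rightarrow> bool" where
  "is_congruence ar A op \<theta> \<longleftrightarrow> equiv A \<theta> \<and>
     (\<forall>f xs ys. length xs = ar f \<longrightarrow> length ys = ar f \<longrightarrow>
        (\<forall>i < ar f. (xs ! i, ys ! i) \<in> \<theta>) \<longrightarrow> (op f xs, op f ys) \<in> \<theta>)"

definition Con :: "('f \<Rightarrow> nat) \<Rightarrow> 'a set \<Rightarrow> ('f \<Rightarrow> 'a list \<Rightarrow> 'a) \<Rightarrow> 'a rel set" where
  "Con ar A op = {\<theta>. is_congruence ar A op \<theta>}"

definition con_join :: "('f \<Rightarrow> nat) \<Rightarrow> 'a set \<Rightarrow> ('f \<Rightarrow> 'a list \<Rightarrow> 'a) \<Rightarrow> 'a rel \<Rightarrow> 'a rel \<Rightarrow> 'a rel" where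
  "con_join ar A op \<theta> \<phi> = \<Inter> {\<psi> \<in> Con ar A op. \<theta> \<union> \<phi> \<subseteq> \<psi>}"

definition congruence_distributive :: "('f \<Rightarrow> nat) \<Rightarrow> 'a set \<Rightarrow> ('f \<Rightarrow> 'a list \<Rightarrow> 'a) \<Rightarrow> bool" where
  "congruence_distributive ar A op \<longleftrightarrow>
     (\<forall>\<theta>\<in>Con ar A op. \<forall>\<phi>\<in>Con ar A op. \<forall>\<psi>\<in>Con ar A op.
        \<theta> \<inter> con_join ar A op \<phi> \<psi> = con_join ar A op (\<theta> \<inter> \<phi>) (\<theta> \<inter> \<psi>))"

definition con_atom :: "('f \<Rightarrow> nat) \<Rightarrow> 'a set \<Rightarrow> ('f \<Rightarrow> 'a list \<Rightarrow> 'a) \<Rightarrow> 'a rel \<Rightarrow> bool" where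
  "con_atom ar A op \<alpha> \<longleftrightarrow> \<alpha> \<in> Con ar A op \<and> \<alpha> \<noteq> Id_on A \<and>
     (\<forall>\<theta>\<in>Con ar A op. Id_on A \<subseteq> \<theta> \<and> \<theta> \<subseteq> \<alpha> \<longrightarrow> \<theta> = Id_on A \<or> \<theta> = \<alpha>)"

definition quot_op :: "('f \<Rightarrow> 'a list \<Rightarrow> 'a) \<Rightarrow> 'a rel \<Rightarrow> 'f \<Rightarrow> 'a set list \<Rightarrow> 'a set" where
  "quot_op op \<alpha> f Xs = \<alpha> `` {op f (map (\<lambda>X. SOME x. x \<in> X) Xs)}"

text \<open>Cardinal inequality |X| \<le> 2\<cdot>|Y|, i.e. X injects into Y \<times> 2.\<close>
definition card_le_twice :: "'a set \<Rightarrow> 'b set \<Rightarrow> bool" where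
  "card_le_twice X Y \<longleftrightarrow> (\<exists>g. inj_on g X \<and> g ` X \<subseteq> Y \<times> (UNIV :: bool set))"

end

theory Submission
  imports Defs
begin

text \<open>Map \<theta> to the pair (\<theta> \<squnion> \<alpha>, [\<alpha> \<le> \<theta>]). The first component is a congruence above \<alpha>,
  hence corresponds to the congruence (\<theta> \<squnion> \<alpha>)/\<alpha> of A/\<alpha>. Since \<alpha> is an atom, \<theta> \<sqinter> \<alpha> is
  \<alpha> or 0 according to the second component. In a distributive lattice an element is
  determined by its join and its meet with a fixed element, so the map is injective.\<close>

lemma Con_equiv: "\<theta> \<in> Con ar A op \<Longrightarrow> equiv A \<theta>"
  unfolding Con_def is_congruence_def by blast

lemma Con_compatible:
  assumes "\<theta> \<in> Con ar A op" "length xs = ar f" "length ys = ar f"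
    and "\<And>i. i < ar f \<Longrightarrow> (xs ! i, ys ! i) \<in> \<theta>"
  shows "(op f xs, op f ys) \<in> \<theta>"
  using assms unfolding Con_def is_congruence_def by blast

lemma Con_subset: "\<theta> \<in> Con ar A op \<Longrightarrow> \<theta> \<subseteq> A \<times> A"
  using Con_equiv equiv_type by blast

lemma Con_Id_on_subset: "\<theta> \<in> Con ar A op \<Longrightarrow> Id_on A \<subseteq> \<theta>"
  using Con_equiv[of \<theta>] by (auto simp: equiv_def refl_on_def)

lemma Con_full:
  assumes "is_algebra ar A op"
  shows "A \<times> A \<in> Con ar A op"
proof -
  have "(op f xs, op f ys) \<in> A \<times> A"
    if "length xs = ar f" "length ys = ar f" "\<forall>i < ar f. (xs ! i, ys ! i) \<in> A \<times> A" for f xs ys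
  proof -
    have "set xs \<subseteq> A" "set ys \<subseteq> A" using that by (auto simp: in_set_conv_nth)
    with assms that show ?thesis unfolding is_algebra_def by blast
  qed
  moreover have "equiv A (A \<times> A)" by (auto simp: equiv_def refl_on_def sym_def trans_def)
  ultimately show ?thesis unfolding Con_def is_congruence_def by blast
qed

lemma Con_Inter:
  assumes "S \<subseteq> Con ar A op" "S \<noteq> {}"
  shows "\<Inter>S \<in> Con ar A op"
proof -
  have "equiv A (\<Inter>S)"
  proof -
    obtain \<theta> where "\<theta> \<in> S" using assms(2) by blast
    then have "\<Inter>S \<subseteq> A \<times> A" using assms(1) Con_subset[of _ ar A op] by blast
    moreover have "Id_on A \<subseteq> \<Inter>S" using assms(1) Con_Id_on_subset[of _ ar A op] by blast
    moreover have "sym (\<Inter>S)" "trans (\<Inter>S)"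
      using sym_INTER[of S id] trans_INTER[of S id] assms(1) Con_equiv[of _ ar A op]
      by (auto simp: equiv_def)
    ultimately show ?thesis by (auto simp: equiv_def refl_on_def)
  qed
  moreover have "(op f xs, op f ys) \<in> \<Inter>S"
    if "length xs = ar f" "length ys = ar f" "\<forall>i < ar f. (xs ! i, ys ! i) \<in> \<Inter>S" for f xs ys
  proof (rule InterI)
    fix \<theta> assume "\<theta> \<in> S"
    with that assms(1) show "(op f xs, op f ys) \<in> \<theta>"
      using Con_compatible[of \<theta> ar A op xs f ys] by blast
  qed
  ultimately show ?thesis unfolding Con_def is_congruence_def by blast
qed

lemma Con_Int: "\<theta> \<in> Con ar A op \<Longrightarrow> \<phi> \<in> Con ar A op \<Longrightarrow> \<theta> \<inter> \<phi> \<in> Con ar A op"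
  using Con_Inter[of "{\<theta>, \<phi>}" ar A op] by simp

lemma con_join_upper: "\<theta> \<subseteq> con_join ar A op \<theta> \<phi>" "\<phi> \<subseteq> con_join ar A op \<theta> \<phi>"
  unfolding con_join_def by blast+

lemma con_join_Con:
  assumes "is_algebra ar A op" "\<theta> \<in> Con ar A op" "\<phi> \<in> Con ar A op"
  shows "con_join ar A op \<theta> \<phi> \<in> Con ar A op"
proof -
  have "A \<times> A \<in> {\<psi> \<in> Con ar A op. \<theta> \<union> \<phi> \<subseteq> \<psi>}"
    using assms Con_full Con_subset by blast
  then show ?thesis unfolding con_join_def by (intro Con_Inter) auto
qed

lemma congruence_distributive_cancel:
  assumes "congruence_distributive ar A op"
    and \<theta>: "\<theta> \<in> Con ar A op" and \<psi>: "\<psi> \<in> Con ar A op" and \<gamma>: "\<gamma> \<in> Con ar A op"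
    and join: "con_join ar A op \<theta> \<gamma> = con_join ar A op \<psi> \<gamma>"
    and meet: "\<theta> \<inter> \<gamma> = \<psi> \<inter> \<gamma>"
  shows "\<theta> = \<psi>"
proof -
  let ?J = "con_join ar A op"
  have distrib: "\<chi> \<inter> ?J \<phi> \<gamma> = ?J (\<chi> \<inter> \<phi>) (\<chi> \<inter> \<gamma>)"
    if "\<chi> \<in> Con ar A op" "\<phi> \<in> Con ar A op" for \<chi> \<phi>
    using assms(1) that \<gamma> unfolding congruence_distributive_def by blast
  have "\<theta> = \<theta> \<inter> ?J \<psi> \<gamma>" using con_join_upper(1)[of \<theta>] join by blast
  also have "\<dots> = ?J (\<theta> \<inter> \<psi>) (\<psi> \<inter> \<gamma>)" using distrib[OF \<theta> \<psi>] meet by simp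
  also have "\<dots> = \<psi> \<inter> ?J \<theta> \<gamma>" using distrib[OF \<psi> \<theta>] meet by (simp add: Int_commute)
  also have "\<dots> = \<psi>" using con_join_upper(1)[of \<psi>] join by blast
  finally show ?thesis .
qed

lemma con_atom_Int:
  assumes "con_atom ar A op \<alpha>" "\<theta> \<in> Con ar A op"
  shows "\<theta> \<inter> \<alpha> = (if \<alpha> \<subseteq> \<theta> then \<alpha> else Id_on A)"
proof -
  have \<alpha>: "\<alpha> \<in> Con ar A op" using assms(1) unfolding con_atom_def by blast
  have "\<theta> \<inter> \<alpha> \<in> Con ar A op" "Id_on A \<subseteq> \<theta> \<inter> \<alpha>"
    using Con_Int[OF assms(2) \<alpha>] Con_Id_on_subset[OF assms(2)] Con_Id_on_subset[OF \<alpha>] by blast+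
  then have "\<theta> \<inter> \<alpha> = Id_on A \<or> \<theta> \<inter> \<alpha> = \<alpha>"
    using assms(1) unfolding con_atom_def by blast
  then show ?thesis by auto
qed

text \<open>For \<alpha> \<subseteq> \<beta> this is the congruence \<beta>/\<alpha> of A/\<alpha>.\<close>

definition quot_rel :: "'a rel \<Rightarrow> 'a rel \<Rightarrow> 'a set rel" where
  "quot_rel \<alpha> \<beta> = {(\<alpha> `` {x}, \<alpha> `` {y}) | x y. (x, y) \<in> \<beta>}"

lemma quot_rel_iff:
  assumes "equiv A \<alpha>" "equiv A \<beta>" "\<alpha> \<subseteq> \<beta>" "x \<in> A" "y \<in> A"
  shows "(\<alpha> `` {x}, \<alpha> `` {y}) \<in> quot_rel \<alpha> \<beta> \<longleftrightarrow> (x, y) \<in> \<beta>"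
proof
  assume "(\<alpha> `` {x}, \<alpha> `` {y}) \<in> quot_rel \<alpha> \<beta>"
  then obtain x' y' where "\<alpha> `` {x} = \<alpha> `` {x'}" "\<alpha> `` {y} = \<alpha> `` {y'}" "(x', y') \<in> \<beta>"
    unfolding quot_rel_def by blast
  moreover from this have "x' \<in> A" "y' \<in> A" using assms(2) equiv_type by blast+
  ultimately have "(x, x') \<in> \<beta>" "(y', y) \<in> \<beta>" "(x', y') \<in> \<beta>"
    using assms eq_equiv_class_iff equiv_def sym_def by (metis subsetD)+
  then show "(x, y) \<in> \<beta>" using assms(2) unfolding equiv_def trans_def by blast
qed (auto simp: quot_rel_def)

lemma quot_rel_inj:
  assumes "\<alpha> \<in> Con ar A op" "\<beta> \<in> Con ar A op" "\<gamma> \<in> Con ar A op" "\<alpha> \<subseteq> \<beta>" "\<alpha> \<subseteq> \<gamma>"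
    and "quot_rel \<alpha> \<beta> = quot_rel \<alpha> \<gamma>"
  shows "\<beta> = \<gamma>"
proof -
  have "(x, y) \<in> \<beta> \<longleftrightarrow> (x, y) \<in> \<gamma>" if "x \<in> A" "y \<in> A" for x y
    using assms quot_rel_iff[OF Con_equiv Con_equiv] that by metis
  then show ?thesis using Con_subset[OF assms(2)] Con_subset[OF assms(3)] by blast
qed

lemma some_in_class:
  assumes "equiv A \<alpha>" "x \<in> A"
  shows "(x, SOME y. y \<in> \<alpha> `` {x}) \<in> \<alpha>"
proof -
  have "x \<in> \<alpha> `` {x}" using assms equiv_class_self by fast
  then show ?thesis by (metis Image_singleton_iff someI)
qed

lemma quot_rel_Con:
  assumes \<alpha>: "\<alpha> \<in> Con ar A op" and \<beta>: "\<beta> \<in> Con ar A op" and "\<alpha> \<subseteq> \<beta>"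
  shows "quot_rel \<alpha> \<beta> \<in> Con ar (A // \<alpha>) (quot_op op \<alpha>)"
proof -
  have E\<alpha>: "equiv A \<alpha>" and E\<beta>: "equiv A \<beta>" using \<alpha> \<beta> Con_equiv by blast+
  let ?rep = "\<lambda>X. SOME x. x \<in> X"
  have "equiv (A // \<alpha>) (quot_rel \<alpha> \<beta>)"
  proof -
    have "quot_rel \<alpha> \<beta> \<subseteq> A // \<alpha> \<times> A // \<alpha>"
      using E\<beta> equiv_type by (fastforce simp: quot_rel_def intro: quotientI)
    moreover have "(X, X) \<in> quot_rel \<alpha> \<beta>" if "X \<in> A // \<alpha>" for X
      using that E\<beta> by (auto simp: quot_rel_def quotient_def equiv_def refl_on_def)
    moreover have "sym (quot_rel \<alpha> \<beta>)"
      using E\<beta> unfolding quot_rel_def equiv_def sym_def by blast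
    moreover have "trans (quot_rel \<alpha> \<beta>)"
    proof (rule transI)
      fix X Y Z assume "(X, Y) \<in> quot_rel \<alpha> \<beta>" "(Y, Z) \<in> quot_rel \<alpha> \<beta>"
      then obtain x y y' z where "X = \<alpha> `` {x}" "Y = \<alpha> `` {y}" "Y = \<alpha> `` {y'}" "Z = \<alpha> `` {z}"
        "(x, y) \<in> \<beta>" "(y', z) \<in> \<beta>"
        unfolding quot_rel_def by blast
      moreover have "y \<in> A" "y' \<in> A" using \<open>(x, y) \<in> \<beta>\<close> \<open>(y', z) \<in> \<beta>\<close> E\<beta> equiv_type by blast+
      then have "(y, y') \<in> \<beta>"
        using eq_equiv_class_iff[OF E\<alpha>] \<open>\<alpha> \<subseteq> \<beta>\<close> calculation(2,3) by blast
      ultimately have "(x, z) \<in> \<beta>" using E\<beta> unfolding equiv_def trans_def by blast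
      then show "(X, Z) \<in> quot_rel \<alpha> \<beta>"
        unfolding quot_rel_def \<open>X = \<alpha> `` {x}\<close> \<open>Z = \<alpha> `` {z}\<close> by blast
    qed
    ultimately show ?thesis by (simp add: equiv_def refl_on_def)
  qed
  moreover have "(quot_op op \<alpha> f Xs, quot_op op \<alpha> f Ys) \<in> quot_rel \<alpha> \<beta>"
    if len: "length Xs = ar f" "length Ys = ar f"
      and rel: "\<forall>i < ar f. (Xs ! i, Ys ! i) \<in> quot_rel \<alpha> \<beta>" for f Xs Ys
  proof -
    have "(?rep (Xs ! i), ?rep (Ys ! i)) \<in> \<beta>" if "i < ar f" for i
    proof -
      obtain x y where xy: "Xs ! i = \<alpha> `` {x}" "Ys ! i = \<alpha> `` {y}" "(x, y) \<in> \<beta>"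
        using rel \<open>i < ar f\<close> unfolding quot_rel_def by blast
      have "x \<in> A" "y \<in> A" using xy(3) E\<beta> equiv_type by blast+
      then have "(?rep (Xs ! i), x) \<in> \<beta>" "(y, ?rep (Ys ! i)) \<in> \<beta>"
        unfolding xy(1,2) using some_in_class[OF E\<alpha>] \<open>\<alpha> \<subseteq> \<beta>\<close> E\<beta>
        by (auto simp: equiv_def intro: symD)
      with xy(3) show ?thesis using E\<beta> by (meson equiv_def transD)
    qed
    then have "(op f (map ?rep Xs), op f (map ?rep Ys)) \<in> \<beta>"
      using len by (intro Con_compatible[OF \<beta>]) auto
    then show ?thesis unfolding quot_op_def quot_rel_def by blast
  qed
  ultimately show ?thesis unfolding Con_def is_congruence_def by blast
qed

theorem lemma4p26:
  fixes ar :: "'f \<Rightarrow> nat" and A :: "'a set" and op :: "'f \<Rightarrow> 'a list \<Rightarrow> 'a"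
    and \<alpha> :: "'a rel"
  assumes "is_algebra ar A op"
    and "congruence_distributive ar A op"
    and "con_atom ar A op \<alpha>"
  shows "card_le_twice (Con ar A op) (Con ar (A // \<alpha>) (quot_op op \<alpha>))"
proof -
  let ?J = "con_join ar A op"
  have \<alpha>: "\<alpha> \<in> Con ar A op" using assms(3) unfolding con_atom_def by blast
  define g where "g \<theta> = (quot_rel \<alpha> (?J \<theta> \<alpha>), \<alpha> \<subseteq> \<theta>)" for \<theta>
  have join_Con: "?J \<theta> \<alpha> \<in> Con ar A op" if "\<theta> \<in> Con ar A op" for \<theta>
    using con_join_Con[OF assms(1) that \<alpha>] .
  have "inj_on g (Con ar A op)"
  proof (rule inj_onI)
    fix \<theta> \<psi> assume \<theta>: "\<theta> \<in> Con ar A op" and \<psi>: "\<psi> \<in> Con ar A op" and "g \<theta> = g \<psi>"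
    then have "quot_rel \<alpha> (?J \<theta> \<alpha>) = quot_rel \<alpha> (?J \<psi> \<alpha>)" "\<alpha> \<subseteq> \<theta> \<longleftrightarrow> \<alpha> \<subseteq> \<psi>"
      unfolding g_def by simp_all
    then have "?J \<theta> \<alpha> = ?J \<psi> \<alpha>" "\<theta> \<inter> \<alpha> = \<psi> \<inter> \<alpha>"
      using quot_rel_inj[OF \<alpha> join_Con[OF \<theta>] join_Con[OF \<psi>] con_join_upper(2) con_join_upper(2)]
        con_atom_Int[OF assms(3) \<theta>] con_atom_Int[OF assms(3) \<psi>] by simp_all
    then show "\<theta> = \<psi>" using congruence_distributive_cancel[OF assms(2) \<theta> \<psi> \<alpha>] by blast
  qed
  moreover have "g ` Con ar A op \<subseteq> Con ar (A // \<alpha>) (quot_op op \<alpha>) \<times> (UNIV :: bool set)"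
    using quot_rel_Con[OF \<alpha> join_Con con_join_upper(2)] unfolding g_def by blast
  ultimately show ?thesis unfolding card_le_twice_def by blast
qed

end
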